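(* In the errorless symmetric relay network described in the context, for every policy $\pi$ and every time slot $t\ge1$, \[ \sum_{\tau=1}^{t-1}R(\mathcal{S}^{\pi}(\tau))\ \ge\ \sum_{\tau=1}^{t}R(\mathcal{U}^{\pi}(\tau)). \]
   Context: Fix integers $K\ge 2$ and $S,U$ with $1\le S<K$, $1\le U<K$, and $S=U$. There are $K$ processes indexed by $k\in\{1,\dots,K\}$ and time slots $t=1,2,\dots$. The state at time $t$ consists of relay AoI values $g_k(t)$ and destination AoI values $h_k(t)$, with $g_k(1)=h_k(1)=1$ for all $k$. A policy $\pi$ is a map assigning to the current state a pair $(\mathcal{S}^{\pi}(t),\mathcal{U}^{\pi}(t))$ of subsets of $\{1,\dots,K\}$ with $|\mathcal{S}^{\pi}(t)|=S$ and $|\mathcal{U}^{\pi}(t)|=U$. Errorless dynamics: $g_k(t+1)=1$ if $k\in\mathcal{S}(t)$, else $g_k(t+1)=g_k(t)+1$; $h_k(t+1)=g_k(t)+1$ if $k\in\mathcal{U}(t)$, else $h_k(t+1)=h_k(t)+1$. Write $g_k^\pi(t),h_k^\pi(t)$ for the sequences under $\pi$. Define $R(\mathcal{S}^{\pi}(\tau))=\sum_{k\in\mathcal{S}^{\pi}(\tau)} g_k^{\pi}(\tau)$ and $R(\mathcal{U}^{\pi}(\tau))=\sum_{k\in\mathcal{U}^{\pi}(\tau)}(h_k^{\pi}(\tau)-g_k^{\pi}(\tau))$; empty sums are $0$. *)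

theory Defs
  imports Main
begin

text \<open>States: relay AoI g and destination AoI h, as functions of the process index k
  (only indices k in {1..K} are meaningful). A policy maps the current state (g, h)
  to the pair (scheduled sampling set, scheduled update set).\<close>

type_synonym aoi = "nat \<Rightarrow> nat"
type_synonym policy = "aoi \<Rightarrow> aoi \<Rightarrow> nat set \<times> nat set"

definition valid_policy :: "nat \<Rightarrow> nat \<Rightarrow> nat \<Rightarrow> policy \<Rightarrow> bool" where
  "valid_policy K S U \<pi> \<longleftrightarrow>
     (\<forall>g h. fst (\<pi> g h) \<subseteq> {1..K} \<and> card (fst (\<pi> g h)) = S
          \<and> snd (\<pi> g h) \<subseteq> {1..K} \<and> card (snd (\<pi> g h)) = U)"

definition step :: "policy \<Rightarrow> aoi \<times> aoi \<Rightarrow> aoi \<times> aoi" where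
  "step \<pi> st =
     (let g = fst st; h = snd st; Ss = fst (\<pi> g h); Us = snd (\<pi> g h) in
      ((\<lambda>k. if k \<in> Ss then 1 else g k + 1),
       (\<lambda>k. if k \<in> Us then g k + 1 else h k + 1)))"

text \<open>traj pi n is the state at time slot t = n + 1.\<close>
primrec traj :: "policy \<Rightarrow> nat \<Rightarrow> aoi \<times> aoi" where
  "traj \<pi> 0 = ((\<lambda>k. 1), (\<lambda>k. 1))"
| "traj \<pi> (Suc n) = step \<pi> (traj \<pi> n)"

definition gA :: "policy \<Rightarrow> nat \<Rightarrow> aoi" where
  "gA \<pi> t = fst (traj \<pi> (t - 1))"

definition hA :: "policy \<Rightarrow> nat \<Rightarrow> aoi" where
  "hA \<pi> t = snd (traj \<pi> (t - 1))"

definition Sset :: "policy \<Rightarrow> nat \<Rightarrow> nat set" where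
  "Sset \<pi> t = fst (\<pi> (gA \<pi> t) (hA \<pi> t))"

definition Uset :: "policy \<Rightarrow> nat \<Rightarrow> nat set" where
  "Uset \<pi> t = snd (\<pi> (gA \<pi> t) (hA \<pi> t))"

definition RS :: "policy \<Rightarrow> nat \<Rightarrow> int" where
  "RS \<pi> t = (\<Sum>k\<in>Sset \<pi> t. int (gA \<pi> t k))"

definition RU :: "policy \<Rightarrow> nat \<Rightarrow> int" where
  "RU \<pi> t = (\<Sum>k\<in>Uset \<pi> t. int (hA \<pi> t k) - int (gA \<pi> t k))"

end

theory Submission
  imports Defs
begin

text \<open>The potential \<open>\<Phi>(t) = \<Sum>\<^sub>k (h\<^sub>k(t) - g\<^sub>k(t))\<close> is a sum of nonnegative terms and
  vanishes at \<open>t = 1\<close>. In slot \<open>t\<close> sampling process \<open>k\<close> adds \<open>g\<^sub>k(t)\<close> to its term and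
  updating it removes the whole term \<open>h\<^sub>k(t) - g\<^sub>k(t)\<close>, so
  \<open>\<Phi>(t+1) = \<Phi>(t) + R(\<S>(t)) - R(\<U>(t))\<close>. Telescoping, \<open>\<Phi>(t)\<close> is the sum of
  \<open>R(\<S>(\<tau>)) - R(\<U>(\<tau>))\<close> over \<open>\<tau> < t\<close>, and \<open>R(\<U>(t)) \<le> \<Phi>(t)\<close> because \<open>\<U>(t)\<close>
  picks out some of the nonnegative terms of \<open>\<Phi>(t)\<close>.\<close>

lemma gA_Suc:
  assumes "t \<ge> 1"
  shows "gA \<pi> (Suc t) k = (if k \<in> Sset \<pi> t then 1 else gA \<pi> t k + 1)"
  using assms by (cases t) (simp_all add: gA_def hA_def Sset_def step_def Let_def)

lemma hA_Suc:
  assumes "t \<ge> 1"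
  shows "hA \<pi> (Suc t) k = (if k \<in> Uset \<pi> t then gA \<pi> t k + 1 else hA \<pi> t k + 1)"
  using assms by (cases t) (simp_all add: gA_def hA_def Uset_def step_def Let_def)

lemma gA_le_hA: "gA \<pi> t k \<le> hA \<pi> t k"
proof -
  have "fst (traj \<pi> n) k \<le> snd (traj \<pi> n) k" for n
    by (induction n arbitrary: k) (auto simp: step_def Let_def)
  then show ?thesis by (simp add: gA_def hA_def)
qed

definition age_gap :: "nat \<Rightarrow> policy \<Rightarrow> nat \<Rightarrow> int" where
  "age_gap K \<pi> t = (\<Sum>k\<in>{1..K}. int (hA \<pi> t k) - int (gA \<pi> t k))"

lemma age_gap_1: "age_gap K \<pi> 1 = 0"
  by (simp add: age_gap_def gA_def hA_def)

lemma age_gap_Suc: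
  assumes "t \<ge> 1" and "Sset \<pi> t \<subseteq> {1..K}" and "Uset \<pi> t \<subseteq> {1..K}"
  shows "age_gap K \<pi> (Suc t) = age_gap K \<pi> t + RS \<pi> t - RU \<pi> t"
proof -
  define d where "d k = int (hA \<pi> t k) - int (gA \<pi> t k)" for k
  have gap_Suc: "int (hA \<pi> (Suc t) k) - int (gA \<pi> (Suc t) k)
      = d k + (if k \<in> Sset \<pi> t then int (gA \<pi> t k) else 0) - (if k \<in> Uset \<pi> t then d k else 0)"
    for k using assms(1) by (simp add: gA_Suc hA_Suc d_def)
  have "age_gap K \<pi> (Suc t) = age_gap K \<pi> t
      + (\<Sum>k\<in>{1..K}. if k \<in> Sset \<pi> t then int (gA \<pi> t k) else 0)
      - (\<Sum>k\<in>{1..K}. if k \<in> Uset \<pi> t then d k else 0)"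
    by (simp add: age_gap_def gap_Suc sum.distrib sum_subtractf d_def)
  also have "(\<Sum>k\<in>{1..K}. if k \<in> Sset \<pi> t then int (gA \<pi> t k) else 0) = RS \<pi> t"
    using assms(2) by (simp add: RS_def sum.inter_restrict[symmetric] inf.absorb2)
  also have "(\<Sum>k\<in>{1..K}. if k \<in> Uset \<pi> t then d k else 0) = RU \<pi> t"
    using assms(3) by (simp add: RU_def d_def sum.inter_restrict[symmetric] inf.absorb2)
  finally show ?thesis .
qed

lemma age_gap_telescope:
  assumes "\<And>\<tau>. Sset \<pi> \<tau> \<subseteq> {1..K}" and "\<And>\<tau>. Uset \<pi> \<tau> \<subseteq> {1..K}"
  shows "age_gap K \<pi> (Suc n) = (\<Sum>\<tau>=1..n. RS \<pi> \<tau>) - (\<Sum>\<tau>=1..n. RU \<pi> \<tau>)"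
proof (induction n)
  case 0
  show ?case using age_gap_1 by simp
next
  case (Suc n)
  then show ?case using age_gap_Suc[of "Suc n", OF _ assms] by simp
qed

lemma RU_le_age_gap:
  assumes "Uset \<pi> t \<subseteq> {1..K}"
  shows "RU \<pi> t \<le> age_gap K \<pi> t"
  unfolding RU_def age_gap_def
  by (rule sum_mono2) (use assms gA_le_hA in auto)

text \<open>Only the containment of the scheduled sets in \<open>{1..K}\<close> is used.\<close>

theorem proposition1:
  fixes K S U t :: nat and \<pi> :: policy
  assumes "K \<ge> 2" and "1 \<le> S" and "S < K" and "1 \<le> U" and "U < K" and "S = U"
    and "valid_policy K S U \<pi>"
    and "t \<ge> 1"
  shows "(\<Sum>\<tau>=1..t-1. RS \<pi> \<tau>) \<ge> (\<Sum>\<tau>=1..t. RU \<pi> \<tau>)"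
proof -
  obtain n where t: "t = Suc n" using \<open>t \<ge> 1\<close> by (cases t) auto
  have S_sub: "Sset \<pi> \<tau> \<subseteq> {1..K}" and U_sub: "Uset \<pi> \<tau> \<subseteq> {1..K}" for \<tau>
    using \<open>valid_policy K S U \<pi>\<close> by (auto simp: valid_policy_def Sset_def Uset_def)
  have "RU \<pi> t \<le> age_gap K \<pi> t"
    by (rule RU_le_age_gap[OF U_sub])
  also have "\<dots> = (\<Sum>\<tau>=1..n. RS \<pi> \<tau>) - (\<Sum>\<tau>=1..n. RU \<pi> \<tau>)"
    unfolding t by (rule age_gap_telescope[OF S_sub U_sub])
  finally show ?thesis by (simp add: t)
qed

end
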